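(* Let $\mathcal H$ be a cycle-reset SHS. Then $\mathcal T_{\mathcal H}$ is decisive with respect to every measurable set $B\in\Sigma_{\mathcal H}$.
   Context: Stochastic hybrid system (SHS) with $n$ variables: a finite set $L$ of locations; a finite set $E$ of edges $e=(\ell,a,\ell')$; for each $\ell$ an invariant $\mathrm{Inv}(\ell)\subseteq\mathbb R^n$ and a flow $\gamma_\ell:\mathbb R^n\times\mathbb R^+\to\mathbb R^n$; for each edge $e$ a guard $\mathcal G(e)\subseteq\mathbb R^n$ and a reset map $\mathbf v\mapsto\mathcal R_e(\mathbf v)\subseteq\mathbb R^n$. States $S_{\mathcal H}=L\times\mathbb R^n$ with $\sigma$-algebra $\Sigma_{\mathcal H}$ (product of discrete and Borel); $s+\tau=(\ell,\gamma_\ell(\mathbf v,\tau))$ for $s=(\ell,\mathbf v)$; $e$ enabled in $(\ell,\mathbf v)$ if $\mathbf v\in\mathcal G(e)$. $I(s)$ is the set of $\tau\ge0$ such that the trajectory stays in $\mathrm{Inv}(\ell)$ on $[0,\tau]$ and some edge is enabled at $s+\tau$ (assumed nonempty). Probabilistic data: delay distributions $\mu_s$ on $\mathbb R^+$ with $\mu_s(I(s))=1$; edge distributions $w_{s'}$ giving positive probability exactly to edges enabled in $s'$; reset distributions $\eta_e(\mathbf v)$ with $\eta_e(\mathbf v)(\mathcal R_e(\mathbf v))=1$. The STS $\mathcal T_{\mathcal H}$ has kernel $\kappa((\ell,\mathbf v),\{\ell'\}\times D)=\int\sum_{e=(\ell,a,\ell')}w_{s+\tau}(e)\,\eta_e(\gamma_\ell(\mathbf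 v,\tau))(D)\,d\mu_s(\tau)$. An edge $e$ is strongly reset if $\eta_e(\mathbf v)$ does not depend on $\mathbf v$; its common value is denoted $\eta^*_e$. $\mathcal H$ is cycle-reset if every cycle of the directed graph on $L$ with an arc $\ell\to\ell'$ whenever some edge $(\ell,a,\ell')\in E$ exists contains an arc $\ell\to\ell'$ such that all edges from $\ell$ to $\ell'$ are strongly reset. STS notions: $\mathbb P^{\mathcal T}_\mu$ induced probability on runs; $\widetilde B=\{s:\mathbb P_{\delta_s}(\mathbf F B)=0\}$; $\mathcal T$ is decisive w.r.t. $B$ if $\mathbb P^{\mathcal T}_\mu(\mathbf F B\vee\mathbf F\widetilde B)=1$ for every initial distribution $\mu$. *)

theory Defs
  imports "HOL-Probability.Probability"
begin

text \<open>An STS is given by a measurable state space M and a Markov kernel K.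
  cyl_prob K A m s is the probability, starting in s, that the first m+1 states
  of the run lie in A 0, ..., A m (finite-dimensional distributions).\<close>

fun cyl_prob :: "('s \<Rightarrow> 's measure) \<Rightarrow> (nat \<Rightarrow> 's set) \<Rightarrow> nat \<Rightarrow> 's \<Rightarrow> ennreal" where
  "cyl_prob K A 0 s = indicator (A 0) s"
| "cyl_prob K A (Suc m) s =
     indicator (A 0) s * (\<integral>\<^sup>+ t. cyl_prob K (\<lambda>i. A (Suc i)) m t \<partial>(K s))"

definition is_run_measure ::
  "'s measure \<Rightarrow> ('s \<Rightarrow> 's measure) \<Rightarrow> 's measure \<Rightarrow> 's stream measure \<Rightarrow> bool" where
  "is_run_measure M K \<mu> P \<longleftrightarrow>
     sets P = sets (stream_space M) \<and> prob_space P \<and>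
     (\<forall>A m. (\<forall>i. A i \<in> sets M) \<longrightarrow>
        emeasure P {\<omega> \<in> space (stream_space M). \<forall>i\<le>m. \<omega> !! i \<in> A i}
          = (\<integral>\<^sup>+ s. cyl_prob K A m s \<partial>\<mu>))"

definition ev_set :: "'s measure \<Rightarrow> 's set \<Rightarrow> 's stream set" where
  "ev_set M B = {\<omega> \<in> space (stream_space M). \<exists>i. \<omega> !! i \<in> B}"

definition avoid_set :: "'s measure \<Rightarrow> ('s \<Rightarrow> 's measure) \<Rightarrow> 's set \<Rightarrow> 's set" where
  "avoid_set M K B = {s \<in> space M. \<forall>P. is_run_measure M K (return M s) P \<longrightarrow>
                        emeasure P (ev_set M B) = 0}"

definition decisive :: "'s measure \<Rightarrow> ('s \<Rightarrow> 's measure) \<Rightarrow> 's set \<Rightarrow> bool" where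
  "decisive M K B \<longleftrightarrow>
     (\<forall>\<mu> P. prob_space \<mu> \<and> sets \<mu> = sets M \<and> is_run_measure M K \<mu> P \<longrightarrow>
        emeasure P (ev_set M B \<union> ev_set M (avoid_set M K B)) = 1)"

text \<open>Locations: a finite type 'l; variables: real ^ 'n; edges (l, a, l').\<close>

definition src :: "'l \<times> 'a \<times> 'l \<Rightarrow> 'l" where "src e = fst e"
definition tgt :: "'l \<times> 'a \<times> 'l \<Rightarrow> 'l" where "tgt e = snd (snd e)"

definition shs_space :: "('l \<times> (real ^ 'n)) measure" where
  "shs_space = count_space UNIV \<Otimes>\<^sub>M borel"

definition shift :: "('l \<Rightarrow> real ^ 'n \<Rightarrow> real \<Rightarrow> real ^ 'n) \<Rightarrow> 'l \<times> (real ^ 'n) \<Rightarrow> real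
                       \<Rightarrow> 'l \<times> (real ^ 'n)" where
  "shift \<gamma> s \<tau> = (fst s, \<gamma> (fst s) (snd s) \<tau>)"

definition enabled :: "('l \<times> 'a \<times> 'l \<Rightarrow> (real ^ 'n) set) \<Rightarrow> 'l \<times> 'a \<times> 'l
                        \<Rightarrow> 'l \<times> (real ^ 'n) \<Rightarrow> bool" where
  "enabled G e s \<longleftrightarrow> src e = fst s \<and> snd s \<in> G e"

definition delay_set ::
  "('l \<times> 'a \<times> 'l) set \<Rightarrow> ('l \<Rightarrow> (real ^ 'n) set) \<Rightarrow> ('l \<Rightarrow> real ^ 'n \<Rightarrow> real \<Rightarrow> real ^ 'n)
    \<Rightarrow> ('l \<times> 'a \<times> 'l \<Rightarrow> (real ^ 'n) set) \<Rightarrow> 'l \<times> (real ^ 'n) \<Rightarrow> real set" where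
  "delay_set E Inv \<gamma> G s = {\<tau>. 0 \<le> \<tau> \<and> (\<forall>t\<in>{0..\<tau>}. \<gamma> (fst s) (snd s) t \<in> Inv (fst s)) \<and>
                                 (\<exists>e\<in>E. enabled G e (shift \<gamma> s \<tau>))}"

definition strongly_reset :: "('l \<times> 'a \<times> 'l \<Rightarrow> real ^ 'n \<Rightarrow> (real ^ 'n) measure)
                               \<Rightarrow> 'l \<times> 'a \<times> 'l \<Rightarrow> bool" where
  "strongly_reset \<eta> e \<longleftrightarrow> (\<forall>v v'. \<eta> e v = \<eta> e v')"

definition loc_arc :: "('l \<times> 'a \<times> 'l) set \<Rightarrow> 'l \<Rightarrow> 'l \<Rightarrow> bool" where
  "loc_arc E l l' \<longleftrightarrow> (\<exists>a. (l, a, l') \<in> E)"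

text \<open>A cycle of the location graph, given as the list of its vertices l_0, ..., l_k
  with l_0 = l_k, k >= 1, and an arc between consecutive vertices.\<close>
definition loc_cycle :: "('l \<times> 'a \<times> 'l) set \<Rightarrow> 'l list \<Rightarrow> bool" where
  "loc_cycle E xs \<longleftrightarrow> 2 \<le> length xs \<and> hd xs = last xs \<and>
      (\<forall>i. Suc i < length xs \<longrightarrow> loc_arc E (xs ! i) (xs ! Suc i))"

definition cycle_reset :: "('l \<times> 'a \<times> 'l) set \<Rightarrow> ('l \<times> 'a \<times> 'l \<Rightarrow> real ^ 'n \<Rightarrow> (real ^ 'n) measure)
                            \<Rightarrow> bool" where
  "cycle_reset E \<eta> \<longleftrightarrow> (\<forall>xs. loc_cycle E xs \<longrightarrow>
      (\<exists>i. Suc i < length xs \<and>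
           (\<forall>a. (xs ! i, a, xs ! Suc i) \<in> E \<longrightarrow> strongly_reset \<eta> (xs ! i, a, xs ! Suc i))))"

text \<open>The well-formedness conditions of an SHS with its probabilistic data, and the
  statement that K is the kernel of the induced STS T_H.\<close>
definition is_shs_sts ::
  "('l \<times> 'a \<times> 'l) set \<Rightarrow> ('l \<Rightarrow> (real ^ 'n) set) \<Rightarrow> ('l \<Rightarrow> real ^ 'n \<Rightarrow> real \<Rightarrow> real ^ 'n)
    \<Rightarrow> ('l \<times> 'a \<times> 'l \<Rightarrow> (real ^ 'n) set) \<Rightarrow> ('l \<times> 'a \<times> 'l \<Rightarrow> real ^ 'n \<Rightarrow> (real ^ 'n) set)
    \<Rightarrow> ('l \<times> (real ^ 'n) \<Rightarrow> real measure) \<Rightarrow> ('l \<times> (real ^ 'n) \<Rightarrow> ('l \<times> 'a \<times> 'l) pmf)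
    \<Rightarrow> ('l \<times> 'a \<times> 'l \<Rightarrow> real ^ 'n \<Rightarrow> (real ^ 'n) measure)
    \<Rightarrow> ('l \<times> (real ^ 'n) \<Rightarrow> ('l \<times> (real ^ 'n)) measure) \<Rightarrow> bool" where
  "is_shs_sts E Inv \<gamma> G R \<mu> w \<eta> K \<longleftrightarrow>
     finite E \<and>
     (\<forall>s. delay_set E Inv \<gamma> G s \<noteq> {}) \<and>
     (\<forall>s. prob_space (\<mu> s) \<and> sets (\<mu> s) = sets borel \<and>
          (AE \<tau> in \<mu> s. \<tau> \<in> delay_set E Inv \<gamma> G s)) \<and>
     (\<forall>s. (\<exists>e\<in>E. enabled G e s) \<longrightarrow> set_pmf (w s) = {e \<in> E. enabled G e s}) \<and>
     (\<forall>e v. prob_space (\<eta> e v) \<and> sets (\<eta> e v) = sets borel \<and>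
            (AE x in \<eta> e v. x \<in> R e v)) \<and>
     K \<in> shs_space \<rightarrow>\<^sub>M prob_algebra shs_space \<and>
     (\<forall>s l' D. D \<in> sets borel \<longrightarrow>
        emeasure (K s) ({l'} \<times> D) =
          (\<integral>\<^sup>+ \<tau>. ennreal (\<Sum>e\<in>{e \<in> E. src e = fst s \<and> tgt e = l'}.
               pmf (w (shift \<gamma> s \<tau>)) e * measure (\<eta> e (\<gamma> (fst s) (snd s) \<tau>)) D) \<partial>(\<mu> s)))"

end

theory Submission
  imports Defs
begin

text \<open>
  Let \<open>U\<close> be the set of states lying neither in \<open>B\<close> nor in \<open>B\<^sup>~\<close>, and \<open>h s\<close> the probability of
  staying in \<open>U\<close> forever from \<open>s\<close>; decisiveness means \<open>h = 0\<close>. The function \<open>h\<close> is bounded by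
  \<open>1\<close> and subharmonic, \<open>h \<le> \<kappa> h\<close>. Since every cycle of the location graph contains a strongly
  reset arc, the arcs that are not strongly reset form an acyclic graph, and induction along it
  shows \<open>h \<le> H\<close>, where \<open>H\<close> is the largest of the averages \<open>\<integral> h d\<eta>\<^sup>*\<^sub>e\<close> over strongly reset edges
  \<open>e\<close>: a transition either follows a strongly reset edge, after which the average of \<open>h\<close> is at
  most \<open>H\<close>, or moves to a location already treated. Iterating \<open>h \<le> \<kappa> h\<close> then gives
  \<open>h \<le> H \<cdot> P(\<not>B for m steps)\<close>. If \<open>H = \<integral> h d\<eta>\<^sup>*\<^sub>e\<close> were positive, then either \<open>\<eta>\<^sup>*\<^sub>e\<close> gives positive
  weight to states that reach \<open>B\<close>, so that \<open>\<integral> P(\<not>B for m steps) d\<eta>\<^sup>*\<^sub>e < 1\<close> for some \<open>m\<close> and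
  \<open>H < H\<close>, or \<open>\<eta>\<^sup>*\<^sub>e\<close> is concentrated on \<open>B\<^sup>~\<close>, where \<open>h\<close> vanishes, so that \<open>H = 0\<close>.
\<close>

section \<open>Lower integrals of non-measurable functions\<close>

text \<open>The kernel of \<open>\<T>\<^sub>\<H>\<close> is only given on rectangles, by an integral over delays whose
  integrand need not be measurable; for such integrands \<open>nn_integral\<close> is the lower integral,
  which is superadditive and positively homogeneous.\<close>

lemma nn_integral_add_ge:
  "integral\<^sup>N N f + integral\<^sup>N N g \<le> (\<integral>\<^sup>+x. f x + g x \<partial>N)"
proof -
  let ?A = "{a. simple_function N a \<and> a \<le> f}" and ?B = "{b. simple_function N b \<and> b \<le> g}"
  have "?A \<noteq> {}" "?B \<noteq> {}" by (auto intro!: exI[of _ "\<lambda>_. 0"] simp: le_fun_def)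
  have "integral\<^sup>N N f + integral\<^sup>N N g = (SUP a\<in>?A. integral\<^sup>S N a + integral\<^sup>N N g)"
    unfolding nn_integral_def[of N f] by (rule ennreal_SUP_add_left[symmetric]) fact
  also have "\<dots> = (SUP a\<in>?A. SUP b\<in>?B. integral\<^sup>S N a + integral\<^sup>S N b)"
    unfolding nn_integral_def[of N g] using \<open>?B \<noteq> {}\<close> by (simp add: ennreal_SUP_add_right)
  also have "\<dots> \<le> (\<integral>\<^sup>+x. f x + g x \<partial>N)"
  proof (intro SUP_least)
    fix a b assume "a \<in> ?A" "b \<in> ?B"
    then have "integral\<^sup>S N a + integral\<^sup>S N b = (\<integral>\<^sup>Sx. a x + b x \<partial>N)"
      by (intro simple_integral_add[symmetric]) auto
    also have "\<dots> \<le> (\<integral>\<^sup>+x. f x + g x \<partial>N)"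
      unfolding nn_integral_def using \<open>a \<in> ?A\<close> \<open>b \<in> ?B\<close>
      by (intro SUP_upper) (auto simp: le_fun_def intro: add_mono)
    finally show "integral\<^sup>S N a + integral\<^sup>S N b \<le> (\<integral>\<^sup>+x. f x + g x \<partial>N)" .
  qed
  finally show ?thesis .
qed

lemma nn_integral_sum_ge:
  "finite I \<Longrightarrow> (\<Sum>i\<in>I. integral\<^sup>N N (F i)) \<le> (\<integral>\<^sup>+x. (\<Sum>i\<in>I. F i x) \<partial>N)"
proof (induction I rule: finite_induct)
  case (insert i I)
  then have "(\<Sum>j\<in>insert i I. integral\<^sup>N N (F j)) \<le> integral\<^sup>N N (F i) + (\<integral>\<^sup>+x. (\<Sum>j\<in>I. F j x) \<partial>N)"
    by (simp add: add_left_mono)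
  also have "\<dots> \<le> (\<integral>\<^sup>+x. (\<Sum>j\<in>insert i I. F j x) \<partial>N)"
    using nn_integral_add_ge insert.hyps by simp
  finally show ?case .
qed simp

lemma nn_integral_cmult_finite:
  assumes "c \<noteq> \<top>"
  shows "(\<integral>\<^sup>+x. c * f x \<partial>N) = c * integral\<^sup>N N f"
proof -
  have ge: "d * integral\<^sup>N N g \<le> (\<integral>\<^sup>+x. d * g x \<partial>N)" for d g
  proof -
    have "d * integral\<^sup>N N g = (SUP a\<in>{a. simple_function N a \<and> a \<le> g}. d * integral\<^sup>S N a)"
      unfolding nn_integral_def by (rule SUP_mult_left_ennreal)
    also have "\<dots> \<le> (\<integral>\<^sup>+x. d * g x \<partial>N)"
    proof (rule SUP_least)
      fix a assume "a \<in> {a. simple_function N a \<and> a \<le> g}"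
      then have "d * integral\<^sup>S N a = (\<integral>\<^sup>Sx. d * a x \<partial>N)" and "(\<lambda>x. d * a x) \<le> (\<lambda>x. d * g x)"
        by (auto simp: le_fun_def intro: mult_left_mono)
      with \<open>a \<in> _\<close> show "d * integral\<^sup>S N a \<le> (\<integral>\<^sup>+x. d * g x \<partial>N)"
        unfolding nn_integral_def by (intro SUP_upper2[of "\<lambda>x. d * a x"]) auto
    qed
    finally show ?thesis .
  qed
  show ?thesis
  proof (cases "c = 0")
    case False
    then have "c * inverse c = 1"
      using assms ennreal_divide_self[of c] by (simp add: divide_ennreal_def top.not_eq_extremum)
    then have inv: "c * (inverse c * x) = x" "inverse c * (c * x) = x" for x
      by (simp_all add: mult.assoc[symmetric] mult.commute[of _ c])
    have "c * (inverse c * (\<integral>\<^sup>+x. c * f x \<partial>N)) \<le> c * integral\<^sup>N N f"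
      using ge[of "inverse c" "\<lambda>x. c * f x"] by (intro mult_left_mono) (simp_all add: inv)
    then show ?thesis using ge[of c f] by (simp add: inv antisym)
  qed simp
qed

lemma nn_integral_mixture_simple_le:
  fixes N :: "'v measure" and \<nu> :: "'e \<Rightarrow> 'v measure" and c :: "'e \<Rightarrow> 'r \<Rightarrow> ennreal"
  assumes S: "finite S"
    and mixture: "\<And>D. D \<in> sets N \<Longrightarrow> emeasure N D = (\<integral>\<^sup>+\<tau>. (\<Sum>e\<in>S. c e \<tau> * emeasure (\<nu> e) D) \<partial>mu)"
    and sets_\<nu>: "\<And>e. e \<in> S \<Longrightarrow> sets (\<nu> e) = sets N"
    and U: "simple_function N U" "\<And>x. U x < \<top>"
  shows "(\<integral>\<^sup>+x. U x \<partial>N) \<le> (\<integral>\<^sup>+\<tau>. (\<Sum>e\<in>S. c e \<tau> * (\<integral>\<^sup>+x. U x \<partial>\<nu> e)) \<partial>mu)"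
proof -
  let ?Y = "U ` space N" and ?L = "\<lambda>y. U -` {y} \<inter> space N"
  have Y: "finite ?Y" and L: "?L y \<in> sets N" for y
    using simple_functionD[OF U(1)] by auto
  have "(\<integral>\<^sup>+x. U x \<partial>N) = (\<Sum>y\<in>?Y. y * emeasure N (?L y))"
    using U(1) by (simp add: nn_integral_eq_simple_integral simple_integral_def)
  also have "\<dots> = (\<Sum>y\<in>?Y. \<integral>\<^sup>+\<tau>. y * (\<Sum>e\<in>S. c e \<tau> * emeasure (\<nu> e) (?L y)) \<partial>mu)"
  proof (intro sum.cong refl)
    fix y assume "y \<in> ?Y"
    then have "y \<noteq> \<top>" using U(2) by (auto simp: less_top)
    then show "y * emeasure N (?L y) = (\<integral>\<^sup>+\<tau>. y * (\<Sum>e\<in>S. c e \<tau> * emeasure (\<nu> e) (?L y)) \<partial>mu)"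
      by (simp add: mixture[OF L] nn_integral_cmult_finite[OF \<open>y \<noteq> \<top>\<close>])
  qed
  also have "\<dots> \<le> (\<integral>\<^sup>+\<tau>. (\<Sum>y\<in>?Y. y * (\<Sum>e\<in>S. c e \<tau> * emeasure (\<nu> e) (?L y))) \<partial>mu)"
    using Y by (rule nn_integral_sum_ge)
  also have "\<dots> = (\<integral>\<^sup>+\<tau>. (\<Sum>e\<in>S. c e \<tau> * (\<Sum>y\<in>?Y. y * emeasure (\<nu> e) (?L y))) \<partial>mu)"
  proof (intro nn_integral_cong)
    fix \<tau>
    have "(\<Sum>y\<in>?Y. y * (\<Sum>e\<in>S. c e \<tau> * emeasure (\<nu> e) (?L y)))
        = (\<Sum>y\<in>?Y. \<Sum>e\<in>S. c e \<tau> * (y * emeasure (\<nu> e) (?L y)))"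
      by (simp add: sum_distrib_left mult.left_commute)
    also have "\<dots> = (\<Sum>e\<in>S. c e \<tau> * (\<Sum>y\<in>?Y. y * emeasure (\<nu> e) (?L y)))"
      by (subst sum.swap) (simp add: sum_distrib_left)
    finally show "(\<Sum>y\<in>?Y. y * (\<Sum>e\<in>S. c e \<tau> * emeasure (\<nu> e) (?L y)))
        = (\<Sum>e\<in>S. c e \<tau> * (\<Sum>y\<in>?Y. y * emeasure (\<nu> e) (?L y)))" .
  qed
  also have "\<dots> = (\<integral>\<^sup>+\<tau>. (\<Sum>e\<in>S. c e \<tau> * (\<integral>\<^sup>+x. U x \<partial>\<nu> e)) \<partial>mu)"
  proof -
    have "(\<integral>\<^sup>+x. U x \<partial>\<nu> e) = (\<Sum>y\<in>?Y. y * emeasure (\<nu> e) (?L y))" if "e \<in> S" for e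
    proof -
      have "simple_function (\<nu> e) U" "space (\<nu> e) = space N"
        using U(1) simple_function_cong_algebra[OF sets_\<nu>[OF that]] sets_eq_imp_space_eq[OF sets_\<nu>[OF that]]
        by blast+
      then show ?thesis by (simp add: nn_integral_eq_simple_integral simple_integral_def)
    qed
    then show ?thesis by (intro nn_integral_cong sum.cong) simp_all
  qed
  finally show ?thesis .
qed

lemma nn_integral_mixture_le:
  fixes N :: "'v measure" and \<nu> :: "'e \<Rightarrow> 'v measure" and c :: "'e \<Rightarrow> 'r \<Rightarrow> ennreal"
  assumes S: "finite S"
    and mixture: "\<And>D. D \<in> sets N \<Longrightarrow> emeasure N D = (\<integral>\<^sup>+\<tau>. (\<Sum>e\<in>S. c e \<tau> * emeasure (\<nu> e) D) \<partial>mu)"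
    and sets_\<nu>: "\<And>e. e \<in> S \<Longrightarrow> sets (\<nu> e) = sets N"
    and prob_\<nu>: "\<And>e. e \<in> S \<Longrightarrow> prob_space (\<nu> e)"
    and g: "g \<in> borel_measurable N"
    and bound: "\<And>e. e \<in> S \<Longrightarrow> (\<integral>\<^sup>+x. g x \<partial>\<nu> e) \<le> T" and T: "T \<noteq> \<top>"
  shows "(\<integral>\<^sup>+x. g x \<partial>N) \<le> T * emeasure N (space N)"
proof -
  obtain u where u: "\<And>i. simple_function N (u i)" "incseq u" "\<And>i x. u i x < \<top>"
      "\<And>x. (SUP i. u i x) = g x"
    using borel_measurable_implies_simple_function_sequence'[OF g] by blast
  have "(\<integral>\<^sup>+x. g x \<partial>N) = (SUP i. \<integral>\<^sup>+x. u i x \<partial>N)"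
    using u by (simp add: nn_integral_monotone_convergence_SUP[symmetric] borel_measurable_simple_function)
  also have "\<dots> \<le> T * emeasure N (space N)"
  proof (rule SUP_least)
    fix i
    have "(\<integral>\<^sup>+x. u i x \<partial>N) \<le> (\<integral>\<^sup>+\<tau>. (\<Sum>e\<in>S. c e \<tau> * (\<integral>\<^sup>+x. u i x \<partial>\<nu> e)) \<partial>mu)"
      using S mixture sets_\<nu> u(1,3) by (rule nn_integral_mixture_simple_le)
    also have "\<dots> \<le> (\<integral>\<^sup>+\<tau>. T * (\<Sum>e\<in>S. c e \<tau> * emeasure (\<nu> e) (space N)) \<partial>mu)"
    proof (intro nn_integral_mono)
      fix \<tau>
      have "c e \<tau> * (\<integral>\<^sup>+x. u i x \<partial>\<nu> e) \<le> T * (c e \<tau> * emeasure (\<nu> e) (space N))" if e: "e \<in> S" for e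
      proof -
        interpret prob_space "\<nu> e" using prob_\<nu>[OF e] .
        have "(\<integral>\<^sup>+x. u i x \<partial>\<nu> e) \<le> T"
          using bound[OF e] u(4) by (metis SUP_upper UNIV_I le_funI nn_integral_mono order_trans)
        then have "c e \<tau> * (\<integral>\<^sup>+x. u i x \<partial>\<nu> e) \<le> c e \<tau> * T"
          by (rule mult_left_mono) simp
        then show ?thesis
          using sets_eq_imp_space_eq[OF sets_\<nu>[OF e]] emeasure_space_1 by (simp add: mult_ac)
      qed
      then show "(\<Sum>e\<in>S. c e \<tau> * (\<integral>\<^sup>+x. u i x \<partial>\<nu> e)) \<le> T * (\<Sum>e\<in>S. c e \<tau> * emeasure (\<nu> e) (space N))"
        by (simp add: sum_distrib_left sum_mono)
    qed
    also have "\<dots> = T * emeasure N (space N)"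
      using T by (simp add: nn_integral_cmult_finite mixture)
    finally show "(\<integral>\<^sup>+x. u i x \<partial>N) \<le> T * emeasure N (space N)" .
  qed
  finally show ?thesis .
qed

section \<open>Stochastic transition systems\<close>

locale sts =
  fixes M :: "'s measure" and K :: "'s \<Rightarrow> 's measure"
  assumes measurable_K[measurable]: "K \<in> M \<rightarrow>\<^sub>M prob_algebra M"
begin

lemma measurable_K_subprob[measurable]: "K \<in> M \<rightarrow>\<^sub>M subprob_algebra M"
  by (rule measurable_prob_algebraD[OF measurable_K])

lemma prob_space_K: "s \<in> space M \<Longrightarrow> prob_space (K s)"
  using measurable_space[OF measurable_K] by (simp add: space_prob_algebra)

lemma sets_K[measurable_cong]: "s \<in> space M \<Longrightarrow> sets (K s) = sets M"
  using measurable_space[OF measurable_K] by (simp add: space_prob_algebra)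

lemma space_K: "s \<in> space M \<Longrightarrow> space (K s) = space M"
  using sets_K by (rule sets_eq_imp_space_eq)

lemma measurable_cyl_prob[measurable]:
  "(\<And>i. A i \<in> sets M) \<Longrightarrow> cyl_prob K A m \<in> borel_measurable M"
proof (induction m arbitrary: A)
  case 0
  then show ?case by simp
next
  case (Suc m)
  then have "cyl_prob K (\<lambda>i. A (Suc i)) m \<in> borel_measurable M" by simp
  then have "(\<lambda>s. \<integral>\<^sup>+ t. cyl_prob K (\<lambda>i. A (Suc i)) m t \<partial>K s) \<in> borel_measurable M"
    by (intro measurable_compose[OF measurable_K_subprob nn_integral_measurable_subprob_algebra])
  with Suc.prems show ?case by simp
qed

lemma cyl_prob_le_1: "s \<in> space M \<Longrightarrow> cyl_prob K A m s \<le> 1"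
proof (induction m arbitrary: A s)
  case (Suc m)
  interpret prob_space "K s" using prob_space_K Suc.prems .
  have "(\<integral>\<^sup>+ t. cyl_prob K (\<lambda>i. A (Suc i)) m t \<partial>K s) \<le> (\<integral>\<^sup>+ t. 1 \<partial>K s)"
    by (intro nn_integral_mono) (simp add: space_K Suc.prems Suc.IH)
  then show ?case by (simp add: indicator_def emeasure_space_1)
qed (simp add: indicator_def)

lemma cyl_prob_mono: "(\<And>i. A i \<subseteq> A' i) \<Longrightarrow> cyl_prob K A m s \<le> cyl_prob K A' m s"
proof (induction m arbitrary: A A' s)
  case (Suc m)
  have "(\<integral>\<^sup>+ t. cyl_prob K (\<lambda>i. A (Suc i)) m t \<partial>K s) \<le> (\<integral>\<^sup>+ t. cyl_prob K (\<lambda>i. A' (Suc i)) m t \<partial>K s)"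
    by (intro nn_integral_mono Suc.IH Suc.prems)
  then show ?case using Suc.prems[of 0] by (auto simp: indicator_def)
qed (auto simp: indicator_def)

lemma cyl_prob_Suc_le: "s \<in> space M \<Longrightarrow> cyl_prob K A (Suc m) s \<le> cyl_prob K A m s"
proof (induction m arbitrary: A s)
  case 0
  interpret prob_space "K s" using prob_space_K 0 .
  have "(\<integral>\<^sup>+ t. cyl_prob K (\<lambda>i. A (Suc i)) 0 t \<partial>K s) \<le> (\<integral>\<^sup>+ t. 1 \<partial>K s)"
    by (intro nn_integral_mono cyl_prob_le_1) (simp add: space_K 0)
  then show ?case
    unfolding cyl_prob.simps(2)[of K A 0] cyl_prob.simps(1)[of K A]
    by (simp add: emeasure_space_1 indicator_def del: cyl_prob.simps)
next
  case (Suc m)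
  have "(\<integral>\<^sup>+ t. cyl_prob K (\<lambda>i. A (Suc i)) (Suc m) t \<partial>K s) \<le> (\<integral>\<^sup>+ t. cyl_prob K (\<lambda>i. A (Suc i)) m t \<partial>K s)"
    by (intro nn_integral_mono Suc.IH) (simp add: Suc.prems space_K)
  then show ?case
    unfolding cyl_prob.simps(2)[of K A] by (rule mult_left_mono) simp
qed

definition stay_prob :: "'s set \<Rightarrow> 's \<Rightarrow> ennreal" where
  "stay_prob C s = (INF m. cyl_prob K (\<lambda>_. C) m s)"

lemma measurable_stay_prob[measurable]: "C \<in> sets M \<Longrightarrow> stay_prob C \<in> borel_measurable M"
  unfolding stay_prob_def by measurable

lemma stay_prob_le_indicator: "stay_prob C s \<le> indicator C s"
  unfolding stay_prob_def by (rule INF_lower2[of 0]) simp_all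

lemma stay_prob_le_1: "stay_prob C s \<le> 1"
  by (rule order_trans[OF stay_prob_le_indicator]) (simp add: indicator_def)

lemma nn_integral_stay_prob:
  assumes C: "C \<in> sets M" and sets_\<nu>: "sets \<nu> = sets M" and \<nu>: "emeasure \<nu> (space \<nu>) \<noteq> \<infinity>"
  shows "(\<integral>\<^sup>+s. stay_prob C s \<partial>\<nu>) = (INF m. \<integral>\<^sup>+s. cyl_prob K (\<lambda>_. C) m s \<partial>\<nu>)"
  unfolding stay_prob_def
proof (rule nn_integral_monotone_convergence_INF_AE)
  show "AE s in \<nu>. cyl_prob K (\<lambda>_. C) (Suc m) s \<le> cyl_prob K (\<lambda>_. C) m s" for m
    by (intro AE_I2 cyl_prob_Suc_le) (simp add: sets_eq_imp_space_eq[OF sets_\<nu>])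
  show "cyl_prob K (\<lambda>_. C) m \<in> borel_measurable \<nu>" for m
    using C by (simp add: measurable_cong_sets[OF sets_\<nu> refl])
  have "(\<integral>\<^sup>+s. cyl_prob K (\<lambda>_. C) 0 s \<partial>\<nu>) \<le> (\<integral>\<^sup>+s. 1 \<partial>\<nu>)"
    by (intro nn_integral_mono) (simp add: indicator_def)
  with \<nu> show "(\<integral>\<^sup>+s. cyl_prob K (\<lambda>_. C) 0 s \<partial>\<nu>) < \<infinity>"
    by (simp add: less_top)
qed

lemma stay_prob_le_nn_integral:
  assumes C: "C \<in> sets M" and s: "s \<in> space M"
  shows "stay_prob C s \<le> indicator C s * (\<integral>\<^sup>+t. stay_prob C t \<partial>K s)"
proof -
  interpret prob_space "K s" using prob_space_K[OF s] .
  have "stay_prob C s \<le> (INF m. cyl_prob K (\<lambda>_. C) (Suc m) s)"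
    unfolding stay_prob_def by (rule INF_mono) blast
  also have "\<dots> = indicator C s * (INF m. \<integral>\<^sup>+t. cyl_prob K (\<lambda>_. C) m t \<partial>K s)"
    by (cases "s \<in> C") simp_all
  also have "\<dots> = indicator C s * (\<integral>\<^sup>+t. stay_prob C t \<partial>K s)"
    using C sets_K[OF s] emeasure_space_1 by (simp add: nn_integral_stay_prob)
  finally show ?thesis .
qed

lemma stay_prob_le_cyl_prob:
  assumes C: "C \<in> sets M" and bound: "\<And>t. t \<in> space M \<Longrightarrow> stay_prob C t \<le> c"
  shows "s \<in> space M \<Longrightarrow> stay_prob C s \<le> c * cyl_prob K (\<lambda>_. C) m s"
proof (induction m arbitrary: s)
  case 0
  interpret prob_space "K s" using prob_space_K[OF 0] .
  have "stay_prob C s \<le> indicator C s * (\<integral>\<^sup>+t. stay_prob C t \<partial>K s)"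
    using C 0 by (rule stay_prob_le_nn_integral)
  also have "\<dots> \<le> indicator C s * (\<integral>\<^sup>+t. c \<partial>K s)"
    by (intro mult_left_mono nn_integral_mono bound) (simp_all add: space_K[OF 0])
  finally show ?case by (simp add: emeasure_space_1 mult.commute)
next
  case (Suc m)
  have "stay_prob C s \<le> indicator C s * (\<integral>\<^sup>+t. stay_prob C t \<partial>K s)"
    using C Suc.prems by (rule stay_prob_le_nn_integral)
  also have "\<dots> \<le> indicator C s * (\<integral>\<^sup>+t. c * cyl_prob K (\<lambda>_. C) m t \<partial>K s)"
    by (intro mult_left_mono nn_integral_mono Suc.IH) (simp_all add: space_K[OF Suc.prems])
  also have "\<dots> = c * cyl_prob K (\<lambda>_. C) (Suc m) s"
    using C by (simp add: nn_integral_cmult measurable_cong_sets[OF sets_K[OF Suc.prems] refl] mult_ac)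
  finally show ?case .
qed

lemma emeasure_always:
  assumes run: "is_run_measure M K \<mu> P" and sets_\<mu>: "sets \<mu> = sets M" and "prob_space \<mu>"
    and C[measurable]: "C \<in> sets M"
  shows "emeasure P {\<omega> \<in> space (stream_space M). \<forall>i. \<omega> !! i \<in> C} = (\<integral>\<^sup>+s. stay_prob C s \<partial>\<mu>)"
proof -
  interpret \<mu>: prob_space \<mu> by fact
  interpret P: prob_space P using run unfolding is_run_measure_def by blast
  have sets_P: "sets P = sets (stream_space M)" using run unfolding is_run_measure_def by blast
  define S where "S m = {\<omega> \<in> space (stream_space M). \<forall>i\<le>m. \<omega> !! i \<in> C}" for m
  have "emeasure P (\<Inter>m. S m) = (INF m. emeasure P (S m))"
    by (rule INF_emeasure_decseq[symmetric]) (auto simp: S_def sets_P decseq_def)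
  also have "\<dots> = (INF m. \<integral>\<^sup>+s. cyl_prob K (\<lambda>_. C) m s \<partial>\<mu>)"
    using run unfolding is_run_measure_def S_def by simp
  also have "\<dots> = (\<integral>\<^sup>+s. stay_prob C s \<partial>\<mu>)"
    using sets_\<mu> by (simp add: nn_integral_stay_prob \<mu>.emeasure_space_1)
  also have "(\<Inter>m. S m) = {\<omega> \<in> space (stream_space M). \<forall>i. \<omega> !! i \<in> C}"
    unfolding S_def by blast
  finally show ?thesis .
qed

lemma emeasure_ev_set:
  assumes run: "is_run_measure M K \<mu> P" and "sets \<mu> = sets M" and "prob_space \<mu>"
    and B[measurable]: "B \<in> sets M"
  shows "emeasure P (ev_set M B) = 1 - (\<integral>\<^sup>+s. stay_prob (space M - B) s \<partial>\<mu>)"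
proof -
  interpret P: prob_space P using run unfolding is_run_measure_def by blast
  have sets_P: "sets P = sets (stream_space M)" using run unfolding is_run_measure_def by blast
  let ?N = "{\<omega> \<in> space (stream_space M). \<forall>i. \<omega> !! i \<in> space M - B}"
  have N: "?N \<in> sets P"
    unfolding sets_P by measurable
  have "ev_set M B = space P - ?N"
    using sets_eq_imp_space_eq[OF sets_P]
    by (auto simp: ev_set_def space_stream_space streams_iff_snth)
  then show ?thesis
    using N emeasure_always[OF assms(1-3), of "space M - B"] P.emeasure_finite[of ?N]
    by (simp add: emeasure_compl P.emeasure_space_1 del: Diff_iff)
qed

end

subsection \<open>Existence of run measures\<close>

text \<open>Weighting the last state by \<open>f\<close> lets \<open>cyl_prob\<close> be unfolded at its last step, which is
  the direction in which the Ionescu-Tulcea construction extends runs.\<close>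

fun cyl_integral ::
  "('s \<Rightarrow> 's measure) \<Rightarrow> (nat \<Rightarrow> 's set) \<Rightarrow> nat \<Rightarrow> ('s \<Rightarrow> ennreal) \<Rightarrow> 's \<Rightarrow> ennreal" where
  "cyl_integral K A 0 f s = indicator (A 0) s * f s"
| "cyl_integral K A (Suc m) f s =
     indicator (A 0) s * (\<integral>\<^sup>+ t. cyl_integral K (\<lambda>i. A (Suc i)) m f t \<partial>K s)"

lemma cyl_integral_0_fun: "cyl_integral K A 0 f = (\<lambda>s. indicator (A 0) s * f s)"
  by (simp add: fun_eq_iff)

lemma cyl_prob_eq_cyl_integral: "cyl_prob K A m = cyl_integral K A m (\<lambda>_. 1)"
proof (induction m arbitrary: A)
  case (Suc m)
  show ?case by (rule ext) (simp add: Suc.IH[of "\<lambda>i. A (Suc i)"])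
qed (simp add: fun_eq_iff)

lemma cyl_integral_Suc_last:
  "cyl_integral K A (Suc m) f =
     cyl_integral K A m (\<lambda>t. \<integral>\<^sup>+y. indicator (A (Suc m)) y * f y \<partial>K t)"
proof (induction m arbitrary: A)
  case (Suc m)
  show ?case by (rule ext) (simp add: Suc.IH[of "\<lambda>i. A (Suc i)"])
qed (simp add: fun_eq_iff cyl_integral_0_fun)

lemma (in Ionescu_Tulcea) prob_space_lim: "prob_space PF.lim"
proof
  have "emeasure PF.lim (PF.emb UNIV {} (space (PiM {} M))) = emeasure (CI {}) (space (PiM {} M))"
    by (rule lim) auto
  moreover have "PF.emb UNIV {} (space (PiM {} M)) = space PF.lim"
    by (auto simp: prod_emb_def space_PiM PiE_iff)
  moreover have "prob_space (CI {})"
    by (rule PF.prob_space_P) auto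
  ultimately show "emeasure PF.lim (space PF.lim) = 1"
    using PF.space_P[of "{}"] prob_space.emeasure_space_1[of "CI {}"] by simp
qed

context sts
begin

definition run_step :: "'s \<Rightarrow> nat \<Rightarrow> (nat \<Rightarrow> 's) \<Rightarrow> 's measure" where
  "run_step s i \<omega> = (if i = 0 then return M s else K (\<omega> (i - 1)))"

lemma Ionescu_Tulcea_run_step:
  assumes s: "s \<in> space M"
  shows "Ionescu_Tulcea (run_step s) (\<lambda>_. M)"
proof (rule Ionescu_Tulcea.intro)
  show "run_step s i \<in> PiM {0..<i} (\<lambda>_. M) \<rightarrow>\<^sub>M subprob_algebra M" for i
  proof (cases "i = 0")
    case False
    then have "(\<lambda>\<omega>. \<omega> (i - 1)) \<in> PiM {0..<i} (\<lambda>_. M) \<rightarrow>\<^sub>M M"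
      by (intro measurable_component_singleton) simp
    with False show ?thesis
      unfolding run_step_def by (simp add: measurable_compose[OF _ measurable_K_subprob])
  next
    case True
    have "return M s \<in> space (subprob_algebra M)"
      using s by (simp add: space_subprob_algebra subprob_space_return)
    with True show ?thesis unfolding run_step_def by simp
  qed
next
  fix i :: nat and \<omega> assume "\<omega> \<in> space (PiM {0..<i} (\<lambda>_. M))"
  then have "i \<noteq> 0 \<Longrightarrow> \<omega> (i - 1) \<in> space M"
    by (auto simp: space_PiM PiE_iff)
  then show "prob_space (run_step s i \<omega>)"
    using s by (simp add: run_step_def prob_space_return prob_space_K)
qed

lemma nn_integral_run_step_eP:
  assumes s: "s \<in> space M" and A: "\<And>i. A i \<in> sets M" and f: "f \<in> borel_measurable M"
    and x: "x \<in> space (PiM {0..<Suc m} (\<lambda>_. M))"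
  shows "(\<integral>\<^sup>+z. indicator (PiE {0..<Suc (Suc m)} A) z * f (z (Suc m))
           \<partial>Ionescu_Tulcea.eP (run_step s) (\<lambda>_. M) (Suc m) x)
         = indicator (PiE {0..<Suc m} A) x * (\<integral>\<^sup>+y. indicator (A (Suc m)) y * f y \<partial>K (x m))"
proof -
  interpret IT: Ionescu_Tulcea "run_step s" "\<lambda>_. M" using s by (rule Ionescu_Tulcea_run_step)
  let ?A = "PiE {0..<Suc (Suc m)} A"
  have "?A \<in> sets (PiM {0..<Suc (Suc m)} (\<lambda>_. M))"
    by (rule sets_PiM_I_finite) (auto simp: A)
  then have F: "(\<lambda>x. indicator ?A x * f (x (Suc m))) \<in> borel_measurable (PiM {0..<Suc (Suc m)} (\<lambda>_. M))"
    using f by measurable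
  from x have "x m \<in> space M" "x \<in> extensional {0..<Suc m}" by (auto simp: space_PiM PiE_iff)
  then have ind: "indicator ?A (x(Suc m := y)) =
      (indicator (PiE {0..<Suc m} A) x * indicator (A (Suc m)) y :: ennreal)" for y
    by (auto simp: indicator_def PiE_iff extensional_def less_Suc_eq)
  have "(\<integral>\<^sup>+z. indicator ?A z * f (z (Suc m)) \<partial>IT.eP (Suc m) x)
      = (\<integral>\<^sup>+y. indicator (PiE {0..<Suc m} A) x * (indicator (A (Suc m)) y * f y) \<partial>K (x m))"
    using IT.nn_integral_eP[OF x F] by (simp add: ind run_step_def mult.assoc)
  also have "\<dots> = indicator (PiE {0..<Suc m} A) x * (\<integral>\<^sup>+y. indicator (A (Suc m)) y * f y \<partial>K (x m))"
    using f A \<open>x m \<in> space M\<close> by (intro nn_integral_cmult) (simp add: measurable_cong_sets[OF sets_K refl])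
  finally show ?thesis .
qed

lemma nn_integral_run_step_C:
  assumes s: "s \<in> space M" and A: "\<And>i. A i \<in> sets M" and f: "f \<in> borel_measurable M"
  shows "(\<integral>\<^sup>+x. indicator (PiE {0..<Suc m} A) x * f (x m)
           \<partial>Ionescu_Tulcea.C (run_step s) (\<lambda>_. M) 0 (Suc m) (\<lambda>_. undefined))
         = cyl_integral K A m f s"
proof -
  interpret IT: Ionescu_Tulcea "run_step s" "\<lambda>_. M" using s by (rule Ionescu_Tulcea_run_step)
  let ?u = "\<lambda>_. undefined :: 's"
  have u: "?u \<in> space (PiM {0..<0::nat} (\<lambda>_. M))" by simp
  show ?thesis
    using f
  proof (induction m arbitrary: f)
    case 0
    have "PiE {0..<Suc 0} A \<in> sets (PiM {0..<Suc 0} (\<lambda>_. M))"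
      by (rule sets_PiM_I_finite) (auto simp: A)
    then have F: "(\<lambda>x. indicator (PiE {0..<Suc 0} A) x * f (x 0)) \<in> borel_measurable (PiM {0..<Suc 0} (\<lambda>_. M))"
      using 0 by measurable
    have ind: "indicator (PiE {0} A) (?u(0 := y)) = (indicator (A 0) y :: ennreal)" for y
      by (auto simp: indicator_def PiE_iff extensional_def)
    have "IT.C 0 (Suc 0) ?u = IT.eP 0 ?u"
      using bind_return[OF IT.measurable_eP[of 0] u] by simp
    then have "(\<integral>\<^sup>+x. indicator (PiE {0..<Suc 0} A) x * f (x 0) \<partial>IT.C 0 (Suc 0) ?u)
        = (\<integral>\<^sup>+y. indicator (A 0) y * f y \<partial>return M s)"
      using IT.nn_integral_eP[OF u F] by (simp add: ind run_step_def)
    also have "\<dots> = indicator (A 0) s * f s"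
      using s 0 A by (intro nn_integral_return) auto
    finally show ?case by simp
  next
    case (Suc m)
    let ?A = "PiE {0..<Suc (Suc m)} A"
    define g where "g t = (\<integral>\<^sup>+y. indicator (A (Suc m)) y * f y \<partial>K t)" for t
    have g: "g \<in> borel_measurable M" unfolding g_def
      using Suc.prems A
      by (intro measurable_compose[OF measurable_K_subprob nn_integral_measurable_subprob_algebra]) auto
    have sets_C: "sets (IT.C 0 (Suc m) ?u) = sets (PiM {0..<Suc m} (\<lambda>_. M))"
      using IT.sets_C[OF u, of "Suc m"] by simp
    have "?A \<in> sets (PiM {0..<Suc (Suc m)} (\<lambda>_. M))"
      by (rule sets_PiM_I_finite) (auto simp: A)
    then have F: "(\<lambda>x. indicator ?A x * f (x (Suc m))) \<in> borel_measurable (PiM {0..<Suc (Suc m)} (\<lambda>_. M))"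
      using Suc.prems by measurable
    have "(\<integral>\<^sup>+x. indicator ?A x * f (x (Suc m)) \<partial>IT.C 0 (Suc (Suc m)) ?u)
       = (\<integral>\<^sup>+x. \<integral>\<^sup>+z. indicator ?A z * f (z (Suc m)) \<partial>IT.eP (Suc m) x \<partial>IT.C 0 (Suc m) ?u)"
    proof -
      have "IT.eP (Suc m) \<in> IT.C 0 (Suc m) ?u \<rightarrow>\<^sub>M subprob_algebra (PiM {0..<Suc (Suc m)} (\<lambda>_. M))"
        unfolding measurable_cong_sets[OF sets_C refl] by (rule IT.measurable_eP)
      moreover have "IT.C 0 (Suc (Suc m)) ?u = IT.C 0 (Suc m) ?u \<bind> IT.eP (Suc m)" by simp
      ultimately show ?thesis using nn_integral_bind[OF F] by simp
    qed
    also have "\<dots> = (\<integral>\<^sup>+x. indicator (PiE {0..<Suc m} A) x * g (x m) \<partial>IT.C 0 (Suc m) ?u)"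
      using nn_integral_run_step_eP[OF s A Suc.prems] sets_eq_imp_space_eq[OF sets_C]
      by (intro nn_integral_cong) (simp add: g_def)
    also have "\<dots> = cyl_integral K A m g s" by (rule Suc.IH[OF g])
    also have "\<dots> = cyl_integral K A (Suc m) f s" unfolding g_def cyl_integral_Suc_last ..
    finally show ?case .
  qed
qed

lemma emeasure_run_step_C:
  assumes s: "s \<in> space M" and A: "\<And>i. A i \<in> sets M"
  shows "emeasure (Ionescu_Tulcea.C (run_step s) (\<lambda>_. M) 0 (Suc m) (\<lambda>_. undefined)) (PiE {0..<Suc m} A)
    = cyl_prob K A m s"
proof -
  interpret IT: Ionescu_Tulcea "run_step s" "\<lambda>_. M" using s by (rule Ionescu_Tulcea_run_step)
  have "PiE {0..<Suc m} A \<in> sets (IT.C 0 (Suc m) (\<lambda>_. undefined))"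
    using IT.sets_C[of "\<lambda>_. undefined" 0 "Suc m"] A by (simp add: sets_PiM_I_finite)
  then have "emeasure (IT.C 0 (Suc m) (\<lambda>_. undefined)) (PiE {0..<Suc m} A)
      = (\<integral>\<^sup>+x. indicator (PiE {0..<Suc m} A) x * (\<lambda>_. 1) (x m) \<partial>IT.C 0 (Suc m) (\<lambda>_. undefined))"
    by (simp add: nn_integral_indicator)
  also have "\<dots> = cyl_prob K A m s"
    unfolding cyl_prob_eq_cyl_integral using s A by (intro nn_integral_run_step_C) simp_all
  finally show ?thesis .
qed

lemma run_measure_exists:
  assumes s: "s \<in> space M"
  shows "\<exists>P. is_run_measure M K (return M s) P"
proof -
  interpret IT: Ionescu_Tulcea "run_step s" "\<lambda>_. M" using s by (rule Ionescu_Tulcea_run_step)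
  let ?u = "\<lambda>_. undefined :: 's"
  define P where "P = distr IT.PF.lim (stream_space M) to_stream"
  have snth_to_stream: "to_stream X !! n = X n" for X :: "nat \<Rightarrow> 's" and n
    by (simp add: to_stream_def)
  have to_stream: "to_stream \<in> IT.PF.lim \<rightarrow>\<^sub>M stream_space M"
    unfolding measurable_cong_sets[OF IT.PF.sets_lim refl] by (rule measurable_to_stream)
  have "emeasure P {\<omega> \<in> space (stream_space M). \<forall>i\<le>m. \<omega> !! i \<in> A i}
          = (\<integral>\<^sup>+ t. cyl_prob K A m t \<partial>return M s)" if A: "\<forall>i. A i \<in> sets M" for A m
  proof -
    have [measurable]: "A i \<in> sets M" for i using A by simp
    let ?X = "PiE {0..<Suc m} A"
    have X: "?X \<in> sets (PiM {0..<Suc m} (\<lambda>_. M))"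
      by (rule sets_PiM_I_finite) auto
    have "to_stream -` {\<omega> \<in> space (stream_space M). \<forall>i\<le>m. \<omega> !! i \<in> A i} \<inter> space IT.PF.lim
        = IT.PF.emb UNIV {0..<Suc m} ?X"
      using snth_to_stream
      by (auto simp: prod_emb_def space_PiM PiE_iff space_stream_space to_stream_in_streams less_Suc_eq_le)
    then have "emeasure P {\<omega> \<in> space (stream_space M). \<forall>i\<le>m. \<omega> !! i \<in> A i}
        = emeasure IT.PF.lim (IT.PF.emb UNIV {0..<Suc m} ?X)"
      unfolding P_def by (subst emeasure_distr[OF to_stream]) (simp_all, measurable)
    also have "\<dots> = emeasure (IT.CI {0..<Suc m}) ?X"
      using X by (rule IT.lim[rotated]) simp
    also have "\<dots> = emeasure (IT.C 0 (Suc m) ?u) (IT.PF.emb {0..<Suc m} {0..<Suc m} ?X)"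
      using X by (rule IT.emeasure_CI[rotated]) simp
    also have "IT.PF.emb {0..<Suc m} {0..<Suc m} ?X = ?X"
      using sets.sets_into_space[of "A _" M] by (intro prod_emb_id) (force simp: PiE_iff)
    also have "emeasure (IT.C 0 (Suc m) ?u) ?X = cyl_prob K A m s"
      using s by (rule emeasure_run_step_C) simp
    also have "\<dots> = (\<integral>\<^sup>+ t. cyl_prob K A m t \<partial>return M s)"
      using s by (intro nn_integral_return[symmetric]) simp_all
    finally show ?thesis .
  qed
  moreover have "prob_space P"
    unfolding P_def by (rule prob_space.prob_space_distr[OF IT.prob_space_lim to_stream])
  ultimately have "is_run_measure M K (return M s) P"
    unfolding is_run_measure_def P_def by simp
  then show ?thesis ..
qed

subsection \<open>Decisiveness\<close>

lemma avoid_set_eq: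
  assumes B: "B \<in> sets M"
  shows "avoid_set M K B = {s \<in> space M. stay_prob (space M - B) s = 1}"
proof -
  have reach: "emeasure P (ev_set M B) = 1 - stay_prob (space M - B) s"
    if "s \<in> space M" "is_run_measure M K (return M s) P" for s P
    using emeasure_ev_set[OF that(2) _ prob_space_return[OF that(1)] B] that(1) B
    by (simp add: nn_integral_return)
  have "1 - stay_prob (space M - B) s = 0 \<longleftrightarrow> stay_prob (space M - B) s = 1" for s
    using stay_prob_le_1[of "space M - B" s] by (auto simp: diff_eq_0_iff_ennreal intro: antisym)
  then show ?thesis
    unfolding avoid_set_def using run_measure_exists reach by metis
qed

lemma sets_avoid_set[measurable]:
  assumes [measurable]: "B \<in> sets M"
  shows "avoid_set M K B \<in> sets M"
  unfolding avoid_set_eq[OF assms] by measurable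

definition undecided :: "'s set \<Rightarrow> 's set" where
  "undecided B = space M - (B \<union> avoid_set M K B)"

lemma sets_undecided[measurable]:
  assumes [measurable]: "B \<in> sets M"
  shows "undecided B \<in> sets M"
  unfolding undecided_def by measurable

lemma decisiveI:
  assumes B: "B \<in> sets M" and stay: "\<And>s. s \<in> space M \<Longrightarrow> stay_prob (undecided B) s = 0"
  shows "decisive M K B"
  unfolding decisive_def
proof (intro allI impI, elim conjE)
  fix \<mu> P assume "prob_space \<mu>" "sets \<mu> = sets M" "is_run_measure M K \<mu> P"
  moreover have "ev_set M B \<union> ev_set M (avoid_set M K B) = ev_set M (B \<union> avoid_set M K B)"
    by (auto simp: ev_set_def)
  moreover have "(\<integral>\<^sup>+s. stay_prob (undecided B) s \<partial>\<mu>) = 0" if "sets \<mu> = sets M"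
    using stay sets_eq_imp_space_eq[OF that] nn_integral_cong[of \<mu> "stay_prob (undecided B)" "\<lambda>_. 0"]
    by simp
  ultimately show "emeasure P (ev_set M B \<union> ev_set M (avoid_set M K B)) = 1"
    using B by (simp add: emeasure_ev_set undecided_def Diff_Un)
qed

lemma nn_integral_stay_prob_undecided_contraction:
  assumes B: "B \<in> sets M" and "prob_space \<nu>" and sets_\<nu>: "sets \<nu> = sets M"
    and bound: "\<And>m s. s \<in> space M \<Longrightarrow> stay_prob (undecided B) s \<le> H * cyl_prob K (\<lambda>_. space M - B) m s"
  shows "\<exists>q<1. (\<integral>\<^sup>+s. stay_prob (undecided B) s \<partial>\<nu>) \<le> H * q"
proof -
  interpret prob_space \<nu> by fact
  let ?r = "stay_prob (space M - B)"
  have space_\<nu>: "space \<nu> = space M" using sets_eq_imp_space_eq[OF sets_\<nu>] .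
  have r: "?r \<in> borel_measurable \<nu>" using B by (simp add: measurable_cong_sets[OF sets_\<nu> refl])
  have "(\<integral>\<^sup>+s. ?r s \<partial>\<nu>) \<le> (\<integral>\<^sup>+s. 1 \<partial>\<nu>)"
    by (intro nn_integral_mono stay_prob_le_1)
  then consider "(\<integral>\<^sup>+s. ?r s \<partial>\<nu>) < 1" | "(\<integral>\<^sup>+s. ?r s \<partial>\<nu>) = 1"
    by (fastforce simp: emeasure_space_1)
  then show ?thesis
  proof cases
    case 1
    then obtain m where m: "(\<integral>\<^sup>+s. cyl_prob K (\<lambda>_. space M - B) m s \<partial>\<nu>) < 1"
      using B sets_\<nu> by (auto simp: nn_integral_stay_prob emeasure_space_1 INF_less_iff)
    have "(\<integral>\<^sup>+s. stay_prob (undecided B) s \<partial>\<nu>) \<le> (\<integral>\<^sup>+s. H * cyl_prob K (\<lambda>_. space M - B) m s \<partial>\<nu>)"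
      using bound by (intro nn_integral_mono) (simp add: space_\<nu>)
    also have "\<dots> = H * (\<integral>\<^sup>+s. cyl_prob K (\<lambda>_. space M - B) m s \<partial>\<nu>)"
      using B by (intro nn_integral_cmult) (simp add: measurable_cong_sets[OF sets_\<nu> refl])
    finally show ?thesis using m by blast
  next
    case 2
    have "(\<integral>\<^sup>+s. 1 - ?r s \<partial>\<nu>) = (\<integral>\<^sup>+s. 1 \<partial>\<nu>) - (\<integral>\<^sup>+s. ?r s \<partial>\<nu>)"
      using r 2 by (intro nn_integral_diff) (simp_all add: stay_prob_le_1)
    also have "\<dots> = 0" using 2 by (simp add: emeasure_space_1)
    finally have "AE s in \<nu>. 1 - ?r s = 0"
      using r by (simp add: nn_integral_0_iff_AE)
    then have "AE s in \<nu>. stay_prob (undecided B) s = 0"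
    proof (rule AE_mp, intro AE_I2 impI)
      fix s assume "s \<in> space \<nu>" "1 - ?r s = 0"
      then have "s \<in> avoid_set M K B"
        using stay_prob_le_1[of "space M - B" s] B
        by (auto simp: avoid_set_eq space_\<nu> diff_eq_0_iff_ennreal intro: antisym)
      then show "stay_prob (undecided B) s = 0"
        using stay_prob_le_indicator[of "undecided B" s] by (simp add: undecided_def)
    qed
    then have "(\<integral>\<^sup>+s. stay_prob (undecided B) s \<partial>\<nu>) = H * 0"
      by (simp add: nn_integral_cong_AE)
    then show ?thesis by (intro exI[of _ 0]) simp
  qed
qed

lemma stay_prob_undecided_eq_0:
  assumes B: "B \<in> sets M" and I: "finite I"
    and \<nu>: "\<And>i. i \<in> I \<Longrightarrow> prob_space (\<nu> i)" "\<And>i. i \<in> I \<Longrightarrow> sets (\<nu> i) = sets M"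
    and dominated: "\<And>s. s \<in> space M \<Longrightarrow>
      stay_prob (undecided B) s \<le> (SUP i\<in>I. \<integral>\<^sup>+t. stay_prob (undecided B) t \<partial>\<nu> i)"
    and s: "s \<in> space M"
  shows "stay_prob (undecided B) s = 0"
proof -
  let ?h = "stay_prob (undecided B)"
  define H where "H = (SUP i\<in>I. \<integral>\<^sup>+t. ?h t \<partial>\<nu> i)"
  have "(\<integral>\<^sup>+t. ?h t \<partial>\<nu> i) \<le> 1" if "i \<in> I" for i
    using nn_integral_mono[of "\<nu> i" ?h "\<lambda>_. 1"] stay_prob_le_1 prob_space.emeasure_space_1[OF \<nu>(1)[OF that]]
    by simp
  then have "H \<le> 1" unfolding H_def by (intro SUP_least)
  then have "H \<noteq> \<top>" by (auto simp: top_unique)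
  have bound: "?h t \<le> H * cyl_prob K (\<lambda>_. space M - B) m t" if "t \<in> space M" for t m
  proof -
    have "?h t \<le> H * cyl_prob K (\<lambda>_. undecided B) m t"
      using B dominated that unfolding H_def by (intro stay_prob_le_cyl_prob) simp_all
    also have "\<dots> \<le> H * cyl_prob K (\<lambda>_. space M - B) m t"
      by (intro mult_left_mono cyl_prob_mono) (auto simp: undecided_def)
    finally show ?thesis .
  qed
  have "H = 0"
  proof (rule ccontr)
    assume "H \<noteq> 0"
    then have "I \<noteq> {}" unfolding H_def by (auto simp: bot_ennreal)
    then have "H \<in> (\<lambda>i. \<integral>\<^sup>+t. ?h t \<partial>\<nu> i) ` I"
      unfolding H_def using I by (simp add: cSup_eq_Max)
    then obtain i where i: "i \<in> I" and H: "H = (\<integral>\<^sup>+t. ?h t \<partial>\<nu> i)" by blast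
    obtain q where "q < 1" and "H \<le> H * q"
      using nn_integral_stay_prob_undecided_contraction[OF B \<nu>[OF i] bound] H by blast
    moreover have "H * q < H * 1"
      using \<open>q < 1\<close> \<open>H \<noteq> 0\<close> \<open>H \<noteq> \<top>\<close>
      by (intro ennreal_mult_strict_left_mono) (simp_all add: less_top zero_less_iff_neq_zero)
    ultimately show False by simp
  qed
  then show ?thesis using dominated[OF s] unfolding H_def by simp
qed

end

section \<open>Cycle-reset stochastic hybrid systems\<close>

lemma wf_non_reset_arcs:
  fixes E :: "('l::finite \<times> 'a \<times> 'l) set"
  assumes cycle_reset: "cycle_reset E \<eta>"
  shows "wf {(l', l). \<exists>a. (l, a, l') \<in> E \<and> \<not> strongly_reset \<eta> (l, a, l')}"
proof -
  define F where "F = {(l, l'). \<exists>a. (l, a, l') \<in> E \<and> \<not> strongly_reset \<eta> (l, a, l')}"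
  have "acyclic F"
    unfolding acyclic_def
  proof (intro allI notI)
    fix x assume "(x, x) \<in> F\<^sup>+"
    then obtain n where "n > 0" "(x, x) \<in> F ^^ n" using trancl_power by blast
    then obtain f where f: "f 0 = x" "f n = x" "\<And>i. i < n \<Longrightarrow> (f i, f (Suc i)) \<in> F"
      using relpow_fun_conv by metis
    define xs where "xs = map f [0..<Suc n]"
    have nth: "i \<le> n \<Longrightarrow> xs ! i = f i" for i unfolding xs_def by (simp del: upt_Suc)
    have "loc_cycle E xs"
      unfolding loc_cycle_def
    proof (intro conjI allI impI)
      show "2 \<le> length xs" using \<open>n > 0\<close> by (simp add: xs_def)
      show "hd xs = last xs" using f by (simp add: xs_def hd_map last_map del: upt_Suc)
      fix i assume "Suc i < length xs"
      then have "i < n" by (simp add: xs_def)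
      then show "loc_arc E (xs ! i) (xs ! Suc i)"
        using f(3) nth by (auto simp: F_def loc_arc_def)
    qed
    then obtain i where i: "Suc i < length xs"
      and "\<And>a. (xs ! i, a, xs ! Suc i) \<in> E \<Longrightarrow> strongly_reset \<eta> (xs ! i, a, xs ! Suc i)"
      using cycle_reset unfolding cycle_reset_def by blast
    moreover from i have "i < n" by (simp add: xs_def)
    ultimately show False using f(3) nth by (fastforce simp: F_def)
  qed
  then have "wf (F\<inverse>)" by (intro finite_acyclic_wf_converse) simp_all
  moreover have "F\<inverse> = {(l', l). \<exists>a. (l, a, l') \<in> E \<and> \<not> strongly_reset \<eta> (l, a, l')}"
    unfolding F_def by auto
  ultimately show ?thesis by simp
qed

lemma space_shs_space: "space (shs_space :: ('l \<times> (real ^ 'n)) measure) = UNIV"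
  by (simp add: shs_space_def space_pair_measure)

lemma measurable_Pair_location[measurable]:
  "Pair l \<in> (borel :: (real ^ 'n) measure) \<rightarrow>\<^sub>M (shs_space :: ('l \<times> (real ^ 'n)) measure)"
  unfolding shs_space_def by measurable

lemma location_slice_in_sets:
  "D \<in> sets borel \<Longrightarrow> {l} \<times> D \<in> sets (shs_space :: ('l \<times> (real ^ 'n)) measure)"
  unfolding shs_space_def by (rule pair_measureI) auto

lemma nn_integral_split_locations:
  fixes N :: "('l::finite \<times> (real ^ 'n)) measure"
  assumes sets_N: "sets N = sets shs_space" and g[measurable]: "g \<in> borel_measurable shs_space"
  shows "(\<integral>\<^sup>+t. g t \<partial>N) = (\<Sum>l\<in>UNIV. \<integral>\<^sup>+t. g t * indicator ({l} \<times> UNIV) t \<partial>N)"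
proof -
  have [measurable]: "{l} \<times> UNIV \<in> sets (shs_space :: ('l \<times> (real ^ 'n)) measure)" for l
    by (rule location_slice_in_sets) simp
  have "g t = (\<Sum>l\<in>UNIV. g t * indicator ({l} \<times> UNIV) t)" for t :: "'l \<times> (real ^ 'n)"
    by (cases t) (simp add: indicator_def)
  then have "(\<integral>\<^sup>+t. g t \<partial>N) = (\<integral>\<^sup>+t. (\<Sum>l\<in>UNIV. g t * indicator ({l} \<times> UNIV) t) \<partial>N)"
    by simp
  also have "\<dots> = (\<Sum>l\<in>UNIV. \<integral>\<^sup>+t. g t * indicator ({l} \<times> UNIV) t \<partial>N)"
    by (intro nn_integral_sum) (unfold measurable_cong_sets[OF sets_N refl], measurable)
  finally show ?thesis .
qed

definition location_slice :: "('l \<times> (real ^ 'n)) measure \<Rightarrow> 'l \<Rightarrow> (real ^ 'n) measure" where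
  "location_slice N l = distr (density N (indicator ({l} \<times> UNIV))) borel snd"

lemma sets_location_slice[simp]: "sets (location_slice N l) = sets borel"
  by (simp add: location_slice_def)

lemma
  fixes N :: "('l \<times> (real ^ 'n)) measure"
  assumes sets_N: "sets N = sets shs_space"
  shows emeasure_location_slice:
      "D \<in> sets borel \<Longrightarrow> emeasure (location_slice N l) D = emeasure N ({l} \<times> D)"
    and nn_integral_location_slice:
      "g \<in> borel_measurable borel \<Longrightarrow>
        (\<integral>\<^sup>+x. g x \<partial>location_slice N l) = (\<integral>\<^sup>+t. g (snd t) * indicator ({l} \<times> UNIV) t \<partial>N)"
proof -
  have slice: "{l} \<times> D \<in> sets N" if "D \<in> sets borel" for D
    unfolding sets_N using that by (rule location_slice_in_sets)
  have [measurable]: "snd \<in> density N (indicator ({l} \<times> UNIV)) \<rightarrow>\<^sub>M (borel :: (real ^ 'n) measure)"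
    by (simp add: measurable_cong_sets[OF sets_density refl] measurable_cong_sets[OF sets_N refl])
      (simp add: shs_space_def)
  show "emeasure (location_slice N l) D = emeasure N ({l} \<times> D)" if D: "D \<in> sets borel" for D
  proof -
    have "snd -` D \<inter> space N \<inter> {l} \<times> UNIV = {l} \<times> D"
      by (auto simp: sets_eq_imp_space_eq[OF sets_N] space_shs_space)
    then show ?thesis
      unfolding location_slice_def using D slice[of UNIV] slice[OF D]
      by (simp add: nn_integral_indicator emeasure_distr emeasure_density
          indicator_inter_arith[symmetric] mult.commute)
  qed
  show "(\<integral>\<^sup>+x. g x \<partial>location_slice N l) = (\<integral>\<^sup>+t. g (snd t) * indicator ({l} \<times> UNIV) t \<partial>N)"
    if "g \<in> borel_measurable borel"
    unfolding location_slice_def using that slice[of UNIV]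
    by (simp add: nn_integral_distr nn_integral_density mult.commute)
qed

locale cycle_reset_shs =
  fixes E :: "('l::finite \<times> 'a \<times> 'l) set"
    and Inv :: "'l \<Rightarrow> (real ^ 'n) set"
    and \<gamma> :: "'l \<Rightarrow> real ^ 'n \<Rightarrow> real \<Rightarrow> real ^ 'n"
    and G :: "'l \<times> 'a \<times> 'l \<Rightarrow> (real ^ 'n) set"
    and R :: "'l \<times> 'a \<times> 'l \<Rightarrow> real ^ 'n \<Rightarrow> (real ^ 'n) set"
    and \<mu> :: "'l \<times> (real ^ 'n) \<Rightarrow> real measure"
    and w :: "'l \<times> (real ^ 'n) \<Rightarrow> ('l \<times> 'a \<times> 'l) pmf"
    and \<eta> :: "'l \<times> 'a \<times> 'l \<Rightarrow> real ^ 'n \<Rightarrow> (real ^ 'n) measure"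
    and K :: "'l \<times> (real ^ 'n) \<Rightarrow> ('l \<times> (real ^ 'n)) measure"
  assumes shs: "is_shs_sts E Inv \<gamma> G R \<mu> w \<eta> K"
    and cycle_reset: "cycle_reset E \<eta>"
begin

sublocale sts shs_space K
  using shs unfolding is_shs_sts_def by unfold_locales blast

lemma finite_E: "finite E"
  using shs unfolding is_shs_sts_def by blast

lemma prob_space_\<eta>: "prob_space (\<eta> e v)"
  using shs unfolding is_shs_sts_def by blast

lemma sets_\<eta>: "sets (\<eta> e v) = sets borel"
  using shs unfolding is_shs_sts_def by blast

text \<open>For a strongly reset edge \<open>e\<close>, \<open>\<eta> e\<close> is constant and \<open>\<eta> e 0\<close> is \<open>\<eta>\<^sup>*\<^sub>e\<close>.\<close>

definition reset_target :: "'l \<times> 'a \<times> 'l \<Rightarrow> ('l \<times> (real ^ 'n)) measure" where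
  "reset_target e = distr (\<eta> e 0) shs_space (Pair (tgt e))"

lemma sets_reset_target: "sets (reset_target e) = sets shs_space"
  by (simp add: reset_target_def)

lemma prob_space_reset_target: "prob_space (reset_target e)"
  unfolding reset_target_def
  by (rule prob_space.prob_space_distr[OF prob_space_\<eta>]) (simp add: measurable_cong_sets[OF sets_\<eta> refl])

lemma nn_integral_reset_target:
  "h \<in> borel_measurable shs_space \<Longrightarrow> (\<integral>\<^sup>+t. h t \<partial>reset_target e) = (\<integral>\<^sup>+x. h (tgt e, x) \<partial>\<eta> e 0)"
  unfolding reset_target_def
  by (subst nn_integral_distr) (simp_all add: measurable_cong_sets[OF sets_\<eta> refl])

lemma emeasure_K:
  "D \<in> sets borel \<Longrightarrow> emeasure (K s) ({l'} \<times> D) =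
    (\<integral>\<^sup>+ \<tau>. ennreal (\<Sum>e\<in>{e \<in> E. src e = fst s \<and> tgt e = l'}.
        pmf (w (shift \<gamma> s \<tau>)) e * measure (\<eta> e (\<gamma> (fst s) (snd s) \<tau>)) D) \<partial>\<mu> s)"
  using shs unfolding is_shs_sts_def by blast

lemma emeasure_K_reset_arc:
  assumes reset: "\<And>a. (fst s, a, l') \<in> E \<Longrightarrow> strongly_reset \<eta> (fst s, a, l')"
    and D: "D \<in> sets borel"
  shows "emeasure (K s) ({l'} \<times> D) =
    (\<integral>\<^sup>+\<tau>. (\<Sum>e\<in>{e \<in> E. src e = fst s \<and> tgt e = l'}.
        ennreal (pmf (w (shift \<gamma> s \<tau>)) e) * emeasure (\<eta> e 0) D) \<partial>\<mu> s)"
  unfolding emeasure_K[OF D]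
proof (intro nn_integral_cong)
  fix \<tau>
  have "ennreal (pmf (w (shift \<gamma> s \<tau>)) e * measure (\<eta> e (\<gamma> (fst s) (snd s) \<tau>)) D)
      = ennreal (pmf (w (shift \<gamma> s \<tau>)) e) * emeasure (\<eta> e 0) D"
    if "e \<in> {e \<in> E. src e = fst s \<and> tgt e = l'}" for e
  proof -
    have "\<eta> e (\<gamma> (fst s) (snd s) \<tau>) = \<eta> e 0"
      using that reset[of "fst (snd e)"] by (cases e) (auto simp: src_def tgt_def strongly_reset_def)
    then show ?thesis
      using finite_measure.emeasure_eq_measure[OF prob_space.finite_measure[OF prob_space_\<eta>]]
      by (simp add: ennreal_mult)
  qed
  then show "ennreal (\<Sum>e\<in>{e \<in> E. src e = fst s \<and> tgt e = l'}.
        pmf (w (shift \<gamma> s \<tau>)) e * measure (\<eta> e (\<gamma> (fst s) (snd s) \<tau>)) D)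
      = (\<Sum>e\<in>{e \<in> E. src e = fst s \<and> tgt e = l'}. ennreal (pmf (w (shift \<gamma> s \<tau>)) e) * emeasure (\<eta> e 0) D)"
    by (simp add: sum_ennreal[symmetric])
qed

lemma nn_integral_K_reset_arc_le:
  assumes reset: "\<And>a. (fst s, a, l') \<in> E \<Longrightarrow> strongly_reset \<eta> (fst s, a, l')"
    and h[measurable]: "h \<in> borel_measurable shs_space"
    and bound: "\<And>e. e \<in> E \<Longrightarrow> strongly_reset \<eta> e \<Longrightarrow> (\<integral>\<^sup>+t. h t \<partial>reset_target e) \<le> T"
    and T: "T \<noteq> \<top>"
  shows "(\<integral>\<^sup>+t. h t * indicator ({l'} \<times> UNIV) t \<partial>K s) \<le> T * emeasure (K s) ({l'} \<times> UNIV)"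
proof -
  let ?S = "{e \<in> E. src e = fst s \<and> tgt e = l'}" and ?N = "location_slice (K s) l'"
  have sets_Ks: "sets (K s) = sets shs_space" by (simp add: sets_K space_shs_space)
  have "(\<integral>\<^sup>+t. h t * indicator ({l'} \<times> UNIV) t \<partial>K s)
      = (\<integral>\<^sup>+t. h (l', snd t) * indicator ({l'} \<times> UNIV) t \<partial>K s)"
    by (intro nn_integral_cong) (auto simp: indicator_def)
  also have "\<dots> = (\<integral>\<^sup>+x. h (l', x) \<partial>?N)"
    using sets_Ks by (simp add: nn_integral_location_slice)
  also have "\<dots> \<le> T * emeasure ?N (space ?N)"
  proof (rule nn_integral_mixture_le[where S = ?S and \<nu> = "\<lambda>e. \<eta> e 0"])
    show "emeasure ?N D = (\<integral>\<^sup>+\<tau>. (\<Sum>e\<in>?S. ennreal (pmf (w (shift \<gamma> s \<tau>)) e) * emeasure (\<eta> e 0) D) \<partial>\<mu> s)"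
      if "D \<in> sets ?N" for D
      using that sets_Ks by (simp add: emeasure_location_slice emeasure_K_reset_arc[OF reset])
    show "(\<integral>\<^sup>+x. h (l', x) \<partial>\<eta> e 0) \<le> T" if "e \<in> ?S" for e
    proof -
      have "strongly_reset \<eta> e"
        using that reset[of "fst (snd e)"] by (cases e) (auto simp: src_def tgt_def)
      with that show ?thesis using bound[of e] by (simp add: nn_integral_reset_target)
    qed
  qed (simp_all add: finite_E sets_\<eta> prob_space_\<eta> T measurable_cong_sets[OF sets_location_slice refl])
  also have "emeasure ?N (space ?N) = emeasure (K s) ({l'} \<times> UNIV)"
    using emeasure_location_slice[OF sets_Ks, of UNIV l']
      sets_eq_imp_space_eq[OF sets_location_slice[of "K s" l']] by simp
  finally show ?thesis .
qed

lemma nn_integral_K_split_locations: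
  "g \<in> borel_measurable shs_space \<Longrightarrow>
    (\<integral>\<^sup>+t. g t \<partial>K s) = (\<Sum>l'\<in>UNIV. \<integral>\<^sup>+t. g t * indicator ({l'} \<times> UNIV) t \<partial>K s)"
  by (rule nn_integral_split_locations) (simp add: sets_K space_shs_space)

lemma subharmonic_le_reset_sup:
  assumes h[measurable]: "h \<in> borel_measurable shs_space" and h_le_1: "\<And>s. h s \<le> 1"
    and subharmonic: "\<And>s. h s \<le> (\<integral>\<^sup>+t. h t \<partial>K s)"
  shows "h s \<le> (SUP e\<in>{e \<in> E. strongly_reset \<eta> e}. \<integral>\<^sup>+t. h t \<partial>reset_target e)"
proof -
  define H where "H = (SUP e\<in>{e \<in> E. strongly_reset \<eta> e}. \<integral>\<^sup>+t. h t \<partial>reset_target e)"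
  have bound: "(\<integral>\<^sup>+t. h t \<partial>reset_target e) \<le> H" if "e \<in> E" "strongly_reset \<eta> e" for e
    unfolding H_def using that by (intro SUP_upper) simp
  have "(\<integral>\<^sup>+t. h t \<partial>reset_target e) \<le> 1" for e
    using nn_integral_mono[of "reset_target e" h "\<lambda>_. 1", OF h_le_1]
      prob_space.emeasure_space_1[OF prob_space_reset_target] by simp
  then have "H \<le> 1" unfolding H_def by (intro SUP_least)
  then have "H \<noteq> \<top>" by (auto simp: top_unique)
  have "\<forall>x. h (l, x) \<le> H" for l
  proof (induction l rule: wf_induct[OF wf_non_reset_arcs[OF cycle_reset]])
    case (1 l)
    show ?case
    proof
      fix x
      interpret prob_space "K (l, x)" using prob_space_K by (simp add: space_shs_space)
      have slice: "(\<integral>\<^sup>+t. h t * indicator ({l'} \<times> UNIV) t \<partial>K (l, x))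
          \<le> H * emeasure (K (l, x)) ({l'} \<times> UNIV)" for l'
      proof (cases "\<exists>a. (l, a, l') \<in> E \<and> \<not> strongly_reset \<eta> (l, a, l')")
        case True
        with 1 have "h (l', y) \<le> H" for y by blast
        then have "(\<integral>\<^sup>+t. h t * indicator ({l'} \<times> UNIV) t \<partial>K (l, x))
            \<le> (\<integral>\<^sup>+t. H * indicator ({l'} \<times> UNIV) t \<partial>K (l, x))"
          by (intro nn_integral_mono) (auto simp: indicator_def)
        also have "\<dots> = H * emeasure (K (l, x)) ({l'} \<times> UNIV)"
          using location_slice_in_sets[of UNIV l']
          by (intro nn_integral_cmult_indicator) (simp add: sets_K space_shs_space)
        finally show ?thesis .
      next
        case False
        then show ?thesis by (intro nn_integral_K_reset_arc_le bound \<open>H \<noteq> \<top>\<close> h) auto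
      qed
      have "h (l, x) \<le> (\<Sum>l'\<in>UNIV. \<integral>\<^sup>+t. h t * indicator ({l'} \<times> UNIV) t \<partial>K (l, x))"
        using subharmonic[of "(l, x)"] by (simp add: nn_integral_K_split_locations)
      also have "\<dots> \<le> (\<Sum>l'\<in>UNIV. H * emeasure (K (l, x)) ({l'} \<times> UNIV))"
        by (intro sum_mono slice)
      also have "\<dots> = (\<Sum>l'\<in>UNIV. \<integral>\<^sup>+t. H * indicator ({l'} \<times> UNIV) t \<partial>K (l, x))"
        using location_slice_in_sets[of UNIV]
        by (intro sum.cong refl nn_integral_cmult_indicator[symmetric]) (simp add: sets_K space_shs_space)
      also have "\<dots> = H"
        using nn_integral_K_split_locations[of "\<lambda>_. H" "(l, x)"] by (simp add: emeasure_space_1)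
      finally show "h (l, x) \<le> H" .
    qed
  qed
  then show ?thesis unfolding H_def by (cases s) blast
qed

end

theorem mainTheorem9:
  fixes E :: "('l::finite \<times> 'a \<times> 'l) set"
    and Inv :: "'l \<Rightarrow> (real ^ 'n) set"
    and \<gamma> :: "'l \<Rightarrow> real ^ 'n \<Rightarrow> real \<Rightarrow> real ^ 'n"
    and G :: "'l \<times> 'a \<times> 'l \<Rightarrow> (real ^ 'n) set"
    and R :: "'l \<times> 'a \<times> 'l \<Rightarrow> real ^ 'n \<Rightarrow> (real ^ 'n) set"
    and \<mu> :: "'l \<times> (real ^ 'n) \<Rightarrow> real measure"
    and w :: "'l \<times> (real ^ 'n) \<Rightarrow> ('l \<times> 'a \<times> 'l) pmf"
    and \<eta> :: "'l \<times> 'a \<times> 'l \<Rightarrow> real ^ 'n \<Rightarrow> (real ^ 'n) measure"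
    and K :: "'l \<times> (real ^ 'n) \<Rightarrow> ('l \<times> (real ^ 'n)) measure"
  assumes "is_shs_sts E Inv \<gamma> G R \<mu> w \<eta> K"
    and "cycle_reset E \<eta>"
  shows "\<forall>B \<in> sets shs_space. decisive shs_space K B"
proof
  interpret cycle_reset_shs E Inv \<gamma> G R \<mu> w \<eta> K
    using assms by (rule cycle_reset_shs.intro)
  fix B :: "('l \<times> (real ^ 'n)) set" assume B: "B \<in> sets shs_space"
  let ?h = "stay_prob (undecided B)"
  have "?h s \<le> (\<integral>\<^sup>+t. ?h t \<partial>K s)" for s
    using stay_prob_le_nn_integral[of "undecided B" s] B
    by (cases "s \<in> undecided B") (simp_all add: space_shs_space)
  then have "?h s \<le> (SUP e\<in>{e \<in> E. strongly_reset \<eta> e}. \<integral>\<^sup>+t. ?h t \<partial>reset_target e)" for s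
    using B by (intro subharmonic_le_reset_sup stay_prob_le_1) simp_all
  then show "decisive shs_space K B"
    using B finite_E prob_space_reset_target sets_reset_target
    by (intro decisiveI stay_prob_undecided_eq_0[where I = "{e \<in> E. strongly_reset \<eta> e}"
        and \<nu> = reset_target]) simp_all
qed

end
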